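(* Fix $\Sigma\in\mathcal{Q}^+_{m,n}$, indices $h,j\in\mathcal{V}_1$ with $h\ge j$, and numbers $\gamma_{kl}\ge0$ for $k,l\in\mathcal{V}_2$, $k\ge l$. Consider $$\min_{\lambda_{hj}\ge0}\ \sum_{k\ge l}\Big[\max\{\lambda_{hj},\gamma_{kl}\}q_{hk,jl}(\Sigma)-\alpha_{hk,jl}\log\max\{\lambda_{hj},\gamma_{kl}\}\Big]+\varepsilon\lambda_{hj}.$$ Let $\tilde\gamma_1<\tilde\gamma_2<\dots<\tilde\gamma_{\tilde u_2}$ ($\tilde u_2\le m_2(m_2+1)/2$) be the distinct values among $\{\gamma_{kl}:k\ge l\}$ in increasing order, and define $\mathcal{C}_u=\{(k,l):k\ge l,\ \gamma_{kl}\le\tilde\gamma_u\}$, $\mathcal{N}_1=\{\tilde\gamma_u:u=1,\dots,\tilde u_2\}$, $\mathcal{N}_2=\{\tilde\lambda_{hj,u}:u=0,1,\dots,\tilde u_2\}$, where $\tilde\lambda_{hj,0}=0$ and, for $u>0$, $$\tilde\lambda_{hj,u}=\frac{\sum_{(k,l)\in\mathcal{C}_u}\alpha_{hk,jl}}{\sum_{(k,l)\in\mathcal{C}_u}q_{hk,jl}(\Sigma)+\varepsilon}.$$ Then this problem admits a solution and all its points of minimum lie in $\mathcal{M}_1=\mathcal{N}_1\cup\mathcal{N}_2$.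
   Context: Let $m_1,m_2,n\in\mathbb{N}$, $m=m_1m_2$, $\mathcal{V}_1=\{1,\dots,m_1\}$, $\mathcal{V}_2=\{1,\dots,m_2\}$, $\varepsilon>0$. $\mathcal{Q}^+_{m,n}$ is the set of matrix pseudo-polynomials $\Sigma(e^{i\vartheta})=S_0+\frac12\sum_{t=1}^n[S_te^{-it\vartheta}+S_t^Te^{it\vartheta}]$ ($S_0=S_0^T$, $S_t\in\mathbb{R}^{m\times m}$) with $\Sigma(e^{i\vartheta})\succ0$ for all $\vartheta\in[-\pi,\pi]$. For $M\in\mathbb{R}^{m\times m}$, $(M)_{hk,jl}$ is the entry in row $(h-1)m_2+k$ and column $(j-1)m_2+l$. $q_{hk,jl}(\Sigma)=\max_{t=0,\dots,n}\max\{|(S_t)_{hk,jl}|,|(S_t)_{hl,jk}|,|(S_t)_{jl,hk}|,|(S_t)_{jk,hl}|\}$. For $h\ge j$, $k\ge l$: $\alpha_{hk,jl}=n+1$ if $h=j,k=l$; $2n+1$ if $h=j,k>l$ or $h>j,k=l$; $4n+2$ if $h>j,k>l$. The objective is taken to be $+\infty$ if some logarithm has argument $0$. *)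

theory Defs
  imports "HOL-Analysis.Analysis"
begin

text \<open>Matrices in R^{m x m} are represented as functions nat => nat => real,
  with rows and columns indexed 1..m (entries outside are irrelevant).
  A matrix pseudo-polynomial is given by its coefficient family S t, t = 0..n.\<close>

definition pp_eval :: "nat \<Rightarrow> (nat \<Rightarrow> nat \<Rightarrow> nat \<Rightarrow> real) \<Rightarrow> real \<Rightarrow> nat \<Rightarrow> nat \<Rightarrow> complex" where
  "pp_eval n S \<theta> a b =
     complex_of_real (S 0 a b) + (1/2) * (\<Sum>t=1..n.
        complex_of_real (S t a b) * exp (- \<i> * of_nat t * of_real \<theta>)
      + complex_of_real (S t b a) * exp (\<i> * of_nat t * of_real \<theta>))"

definition cpos_def :: "nat \<Rightarrow> (nat \<Rightarrow> nat \<Rightarrow> complex) \<Rightarrow> bool" where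
  "cpos_def m A \<longleftrightarrow>
     (\<forall>a\<in>{1..m}. \<forall>b\<in>{1..m}. A a b = cnj (A b a)) \<and>
     (\<forall>z :: nat \<Rightarrow> complex. (\<exists>a\<in>{1..m}. z a \<noteq> 0) \<longrightarrow>
        Re (\<Sum>a=1..m. \<Sum>b=1..m. cnj (z a) * A a b * z b) > 0)"

definition in_Qplus :: "nat \<Rightarrow> nat \<Rightarrow> (nat \<Rightarrow> nat \<Rightarrow> nat \<Rightarrow> real) \<Rightarrow> bool" where
  "in_Qplus m n S \<longleftrightarrow>
     (\<forall>a\<in>{1..m}. \<forall>b\<in>{1..m}. S 0 a b = S 0 b a) \<and>
     (\<forall>\<theta>\<in>{-pi..pi}. cpos_def m (pp_eval n S \<theta>))"

definition blk :: "nat \<Rightarrow> (nat \<Rightarrow> nat \<Rightarrow> real) \<Rightarrow> nat \<Rightarrow> nat \<Rightarrow> nat \<Rightarrow> nat \<Rightarrow> real" where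
  "blk m2 M h k j l = M ((h - 1) * m2 + k) ((j - 1) * m2 + l)"

definition qf :: "nat \<Rightarrow> nat \<Rightarrow> (nat \<Rightarrow> nat \<Rightarrow> nat \<Rightarrow> real) \<Rightarrow> nat \<Rightarrow> nat \<Rightarrow> nat \<Rightarrow> nat \<Rightarrow> real" where
  "qf m2 n S h k j l = Max ((\<lambda>t. max (max \<bar>blk m2 (S t) h k j l\<bar> \<bar>blk m2 (S t) h l j k\<bar>)
                                      (max \<bar>blk m2 (S t) j l h k\<bar> \<bar>blk m2 (S t) j k h l\<bar>)) ` {0..n})"

text \<open>alpha_{hk,jl}, for h >= j and k >= l.\<close>
definition alpha :: "nat \<Rightarrow> nat \<Rightarrow> nat \<Rightarrow> nat \<Rightarrow> nat \<Rightarrow> real" where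
  "alpha n h k j l =
     (if h = j \<and> k = l then real n + 1
      else if (h = j \<and> k > l) \<or> (h > j \<and> k = l) then 2 * real n + 1
      else 4 * real n + 2)"

definition pairs :: "nat \<Rightarrow> (nat \<times> nat) set" where
  "pairs m2 = {(k, l). l \<in> {1..m2} \<and> k \<in> {1..m2} \<and> k \<ge> l}"

text \<open>The objective; +infinity if some logarithm has argument 0.\<close>
definition obj :: "nat \<Rightarrow> nat \<Rightarrow> (nat \<Rightarrow> nat \<Rightarrow> nat \<Rightarrow> real) \<Rightarrow> nat \<Rightarrow> nat \<Rightarrow>
                   (nat \<Rightarrow> nat \<Rightarrow> real) \<Rightarrow> real \<Rightarrow> real \<Rightarrow> ereal" where
  "obj m2 n S h j \<gamma> \<epsilon> lam =
     (if \<exists>(k, l)\<in>pairs m2. max lam (\<gamma> k l) = 0 then \<infinity>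
      else ereal ((\<Sum>(k, l)\<in>pairs m2.
              max lam (\<gamma> k l) * qf m2 n S h k j l - alpha n h k j l * ln (max lam (\<gamma> k l)))
            + \<epsilon> * lam))"

text \<open>C_u for the threshold value g = tilde-gamma_u, and the corresponding tilde-lambda.\<close>
definition Cset :: "nat \<Rightarrow> (nat \<Rightarrow> nat \<Rightarrow> real) \<Rightarrow> real \<Rightarrow> (nat \<times> nat) set" where
  "Cset m2 \<gamma> g = {(k, l) \<in> pairs m2. \<gamma> k l \<le> g}"

definition lam_tilde :: "nat \<Rightarrow> nat \<Rightarrow> (nat \<Rightarrow> nat \<Rightarrow> nat \<Rightarrow> real) \<Rightarrow> nat \<Rightarrow> nat \<Rightarrow>
                         (nat \<Rightarrow> nat \<Rightarrow> real) \<Rightarrow> real \<Rightarrow> real \<Rightarrow> real" where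
  "lam_tilde m2 n S h j \<gamma> \<epsilon> g =
     (\<Sum>(k, l)\<in>Cset m2 \<gamma> g. alpha n h k j l) /
     ((\<Sum>(k, l)\<in>Cset m2 \<gamma> g. qf m2 n S h k j l) + \<epsilon>)"

definition N1 :: "nat \<Rightarrow> (nat \<Rightarrow> nat \<Rightarrow> real) \<Rightarrow> real set" where
  "N1 m2 \<gamma> = (\<lambda>(k, l). \<gamma> k l) ` pairs m2"

definition N2 :: "nat \<Rightarrow> nat \<Rightarrow> (nat \<Rightarrow> nat \<Rightarrow> nat \<Rightarrow> real) \<Rightarrow> nat \<Rightarrow> nat \<Rightarrow>
                  (nat \<Rightarrow> nat \<Rightarrow> real) \<Rightarrow> real \<Rightarrow> real set" where
  "N2 m2 n S h j \<gamma> \<epsilon> = insert 0 (lam_tilde m2 n S h j \<gamma> \<epsilon> ` N1 m2 \<gamma>)"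

definition is_minimizer :: "(real \<Rightarrow> ereal) \<Rightarrow> real \<Rightarrow> bool" where
  "is_minimizer f x \<longleftrightarrow> x \<ge> 0 \<and> (\<forall>y\<ge>0. f x \<le> f y)"

end

theory Submission
  imports Defs
begin

text \<open>Fix \<open>\<lambda> > 0\<close> and let \<open>C\<close> be the set of pairs with \<open>\<gamma>\<^sub>k\<^sub>l \<le> \<lambda>\<close>. On the interval between
  the neighbouring values of \<gamma> the objective is \<open>A \<lambda> - B ln \<lambda> + K\<close> with
  \<open>A = \<Sum>\<^sub>C q + \<epsilon> > 0\<close> and \<open>B = \<Sum>\<^sub>C \<alpha>\<close>. If \<open>C = {}\<close> this is \<open>\<epsilon> \<lambda> + K\<close>, and \<open>\<lambda> = 0\<close> does
  strictly better. Otherwise it is strictly convex with minimum at \<open>B / A\<close>, which is the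
  value of \<open>\<lambda>\<close>-tilde for the largest \<open>\<gamma>\<close> below \<open>\<lambda>\<close>; moving \<open>\<lambda>\<close> to the point of its interval
  nearest to \<open>B / A\<close> (an endpoint, i.e. a value of \<gamma>, or \<open>B / A\<close> itself) strictly decreases the
  objective unless \<open>\<lambda>\<close> is already there. So the finite candidate set \<open>N\<^sub>1 \<union> N\<^sub>2\<close> contains a
  minimiser and every minimiser.\<close>

lemma linear_minus_ln_less:
  fixes A B y z :: real
  assumes "A > 0" "B > 0" "y > 0" "z > 0" "z \<noteq> y" "z \<in> closed_segment (B / A) y"
  shows "A * z - B * ln z < A * y - B * ln y"
proof -
  have "B / A \<le> z \<longleftrightarrow> B \<le> A * z" and "z \<le> B / A \<longleftrightarrow> A * z \<le> B"
    using \<open>A > 0\<close> by (simp_all add: field_simps)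
  then have "(y - z) * (A * z - B) \<ge> 0"
    using \<open>z \<in> closed_segment (B / A) y\<close>
    by (auto simp: closed_segment_eq_real_ivl split: if_splits
        intro: mult_nonneg_nonneg mult_nonpos_nonpos)
  then have "0 \<le> A * (y - z) - B * ((y - z) / z)"
    using \<open>z > 0\<close> by (simp add: field_simps)
  also have "\<dots> < A * (y - z) - B * (ln y - ln z)"
    using mult_strict_left_mono[OF ln_diff_less[of y z] \<open>B > 0\<close>] assms by simp
  finally show ?thesis
    by (simp add: algebra_simps)
qed

locale clipped_log_objective =
  fixes P :: "'a set" and G Q a :: "'a \<Rightarrow> real" and \<epsilon> :: real
  assumes finite_P: "finite P"
    and G_nonneg: "\<And>x. x \<in> P \<Longrightarrow> G x \<ge> 0"
    and Q_nonneg: "\<And>x. x \<in> P \<Longrightarrow> Q x \<ge> 0"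
    and a_pos: "\<And>x. x \<in> P \<Longrightarrow> a x > 0"
    and eps_pos: "\<epsilon> > 0"
begin

definition objective :: "real \<Rightarrow> ereal" where
  "objective lam =
     (if \<exists>x\<in>P. max lam (G x) = 0 then \<infinity>
      else ereal ((\<Sum>x\<in>P. max lam (G x) * Q x - a x * ln (max lam (G x))) + \<epsilon> * lam))"

definition below :: "real \<Rightarrow> 'a set" where
  "below c = {x \<in> P. G x \<le> c}"

definition slope :: "real \<Rightarrow> real" where
  "slope c = (\<Sum>x\<in>below c. Q x) + \<epsilon>"

definition weight :: "real \<Rightarrow> real" where
  "weight c = (\<Sum>x\<in>below c. a x)"

definition stationary_point :: "real \<Rightarrow> real" where
  "stationary_point c = weight c / slope c"

definition candidates :: "real set" where
  "candidates = G ` P \<union> insert 0 (stationary_point ` G ` P)"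

lemma finite_below: "finite (below c)"
  using finite_P by (simp add: below_def)

lemma slope_pos: "slope c > 0"
  unfolding slope_def using eps_pos Q_nonneg
  by (intro add_nonneg_pos sum_nonneg) (auto simp: below_def)

lemma weight_pos: "below c \<noteq> {} \<Longrightarrow> weight c > 0"
  unfolding weight_def using finite_below a_pos
  by (intro sum_pos) (auto simp: below_def)

lemma stationary_point_pos: "below c \<noteq> {} \<Longrightarrow> stationary_point c > 0"
  by (simp add: stationary_point_def weight_pos slope_pos)

lemma finite_candidates: "finite candidates"
  using finite_P by (simp add: candidates_def)

lemma candidates_nonneg:
  assumes "z \<in> candidates"
  shows "z \<ge> 0"
proof -
  have "stationary_point c \<ge> 0" for c
    unfolding stationary_point_def weight_def using slope_pos a_pos
    by (intro divide_nonneg_pos sum_nonneg) (auto simp: below_def less_imp_le)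
  then show ?thesis
    using assms G_nonneg by (auto simp: candidates_def)
qed

lemma objective_eq_on_cell:
  assumes pos: "\<And>x. x \<in> P \<Longrightarrow> max lam (G x) > 0"
    and lower: "\<And>x. x \<in> below c \<Longrightarrow> G x \<le> lam"
    and upper: "\<And>x. x \<in> P - below c \<Longrightarrow> lam \<le> G x"
  shows "objective lam = ereal (slope c * lam - weight c * ln lam
           + (\<Sum>x\<in>P - below c. G x * Q x - a x * ln (G x)))"
proof -
  let ?term = "\<lambda>x. max lam (G x) * Q x - a x * ln (max lam (G x))"
  have "(\<Sum>x\<in>P. ?term x) = (\<Sum>x\<in>below c. ?term x) + (\<Sum>x\<in>P - below c. ?term x)"
    using sum.subset_diff[of "below c" P ?term] finite_P by (simp add: below_def)
  also have "(\<Sum>x\<in>below c. ?term x) = (\<Sum>x\<in>below c. lam * Q x - a x * ln lam)"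
    by (rule sum.cong) (auto dest: lower simp: max_def)
  also have "\<dots> = lam * (\<Sum>x\<in>below c. Q x) - weight c * ln lam"
    by (simp add: weight_def sum_subtractf sum_distrib_left sum_distrib_right)
  also have "(\<Sum>x\<in>P - below c. ?term x) = (\<Sum>x\<in>P - below c. G x * Q x - a x * ln (G x))"
    by (rule sum.cong) (simp_all add: max_def upper)
  finally show ?thesis
    using pos by (force simp: objective_def slope_def algebra_simps)
qed

lemma candidate_in_cell:
  assumes "y > 0" "below y \<noteq> {}"
  obtains z where "z \<in> candidates" "z > 0"
    "\<And>x. x \<in> below y \<Longrightarrow> G x \<le> z" "\<And>x. x \<in> P - below y \<Longrightarrow> z \<le> G x"
    "z \<in> closed_segment (stationary_point y) y"
proof -
  define g where "g = Max (G ` below y)"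
  define t where "t = stationary_point y"
  have g_in: "g \<in> G ` below y" and g_ge: "\<And>x. x \<in> below y \<Longrightarrow> G x \<le> g"
    using assms(2) finite_below by (auto simp: g_def)
  have "g \<le> y"
    using g_in by (auto simp: below_def)
  have "below g = below y"
    using g_ge \<open>g \<le> y\<close> by (auto simp: below_def)
  then have "t = stationary_point g"
    by (simp add: t_def stationary_point_def weight_def slope_def)
  then have t_cand: "t \<in> candidates"
    using g_in by (auto simp: candidates_def below_def)
  have "t > 0"
    unfolding t_def using assms(2) by (rule stationary_point_pos)
  have above: "\<And>x. x \<in> P - below y \<Longrightarrow> y < G x"
    by (auto simp: below_def)
  have g_cand: "g \<in> candidates"
    using g_in by (auto simp: candidates_def below_def)
  consider "t \<le> g" | "\<exists>x\<in>P - below y. G x < t" | "g < t" "\<forall>x\<in>P - below y. t \<le> G x"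
    by (meson not_le)
  then show thesis
  proof cases
    case 1
    show thesis
    proof (rule that[OF g_cand])
      show "g \<in> closed_segment (stationary_point y) y"
        using 1 \<open>g \<le> y\<close> by (simp add: t_def closed_segment_eq_real_ivl)
      show "g \<le> G x" if "x \<in> P - below y" for x
        using above[OF that] \<open>g \<le> y\<close> by simp
    qed (use 1 \<open>t > 0\<close> g_ge in auto)
  next
    case 2
    define g' where "g' = Min (G ` (P - below y))"
    have "finite (G ` (P - below y))" "G ` (P - below y) \<noteq> {}"
      using 2 finite_P by auto
    then have g'_in: "g' \<in> G ` (P - below y)" and g'_le: "\<And>x. x \<in> P - below y \<Longrightarrow> g' \<le> G x"
      by (simp_all add: g'_def)
    have "y < g'" "g' < t"
      using g'_in above 2 g'_le by force+
    show thesis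
    proof (rule that[of g'])
      show "g' \<in> candidates"
        using g'_in by (auto simp: candidates_def)
      show "g' \<in> closed_segment (stationary_point y) y"
        using \<open>y < g'\<close> \<open>g' < t\<close> by (simp add: t_def closed_segment_eq_real_ivl)
      show "G x \<le> g'" if "x \<in> below y" for x
        using that \<open>y < g'\<close> by (simp add: below_def)
    qed (use \<open>y < g'\<close> \<open>y > 0\<close> g'_le in auto)
  next
    case 3
    show thesis
    proof (rule that[OF t_cand \<open>t > 0\<close>])
      show "t \<in> closed_segment (stationary_point y) y"
        by (simp add: t_def)
      show "G x \<le> t" if "x \<in> below y" for x
        using g_ge[OF that] 3 by simp
    qed (use 3 in auto)
  qed
qed

lemma exists_candidate_improving:
  assumes "y \<ge> 0"
  obtains z where "z \<in> candidates" "objective z \<le> objective y"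
    "z \<noteq> y \<Longrightarrow> objective z < objective y"
proof (cases "y \<in> candidates")
  case True
  then show thesis by (intro that[of y]) auto
next
  case False
  then have "y > 0"
    using assms by (auto simp: candidates_def)
  define K where "K = (\<Sum>x\<in>P - below y. G x * Q x - a x * ln (G x))"
  have f_y: "objective y = ereal (slope y * y - weight y * ln y + K)"
    unfolding K_def using \<open>y > 0\<close> by (intro objective_eq_on_cell) (auto simp: below_def)
  show thesis
  proof (cases "below y = {}")
    case True
    have "objective 0 = ereal (slope y * 0 - weight y * ln 0 + K)"
      unfolding K_def using True \<open>y > 0\<close>
      by (intro objective_eq_on_cell) (auto simp: below_def)
    then have "objective 0 < objective y"
      using f_y True \<open>y > 0\<close> eps_pos by (simp add: slope_def weight_def)
    then show thesis
      by (intro that[of 0]) (auto simp: candidates_def)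
  next
    case False
    obtain z where z: "z \<in> candidates" "z > 0"
      "\<And>x. x \<in> below y \<Longrightarrow> G x \<le> z" "\<And>x. x \<in> P - below y \<Longrightarrow> z \<le> G x"
      "z \<in> closed_segment (weight y / slope y) y"
      using candidate_in_cell[OF \<open>y > 0\<close> False]
      unfolding stationary_point_def by blast
    have "objective z = ereal (slope y * z - weight y * ln z + K)"
      unfolding K_def using z by (intro objective_eq_on_cell) auto
    then show thesis
      using f_y z linear_minus_ln_less[OF slope_pos weight_pos[OF False] \<open>y > 0\<close> \<open>z > 0\<close>]
      by (intro that[of z]) (auto simp: order.order_iff_strict)
  qed
qed

theorem minimizers_in_candidates:
  "(\<exists>lam. is_minimizer objective lam) \<and> (\<forall>lam. is_minimizer objective lam \<longrightarrow> lam \<in> candidates)"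
proof
  have "candidates \<noteq> {}"
    by (simp add: candidates_def)
  then obtain z\<^sub>0 where "is_arg_min objective (\<lambda>z. z \<in> candidates) z\<^sub>0"
    using ex_is_arg_min_if_finite[OF finite_candidates] by blast
  then have z\<^sub>0: "z\<^sub>0 \<in> candidates" "\<And>z. z \<in> candidates \<Longrightarrow> objective z\<^sub>0 \<le> objective z"
    by (auto simp: is_arg_min_def not_less)
  have "objective z\<^sub>0 \<le> objective y" if y: "y \<ge> 0" for y
  proof -
    obtain z where "z \<in> candidates" "objective z \<le> objective y"
      using exists_candidate_improving[OF y] by blast
    then show ?thesis
      using z\<^sub>0(2) order_trans by blast
  qed
  then have "is_minimizer objective z\<^sub>0"
    using candidates_nonneg[OF z\<^sub>0(1)] by (simp add: is_minimizer_def)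
  then show "\<exists>lam. is_minimizer objective lam" ..
  show "\<forall>lam. is_minimizer objective lam \<longrightarrow> lam \<in> candidates"
  proof (intro allI impI)
    fix lam assume min: "is_minimizer objective lam"
    then obtain z where z: "z \<in> candidates" "z \<noteq> lam \<Longrightarrow> objective z < objective lam"
      using exists_candidate_improving unfolding is_minimizer_def by blast
    moreover have "objective lam \<le> objective z"
      using min candidates_nonneg[OF z(1)] by (simp add: is_minimizer_def)
    ultimately show "lam \<in> candidates"
      using not_less by blast
  qed
qed

end

lemma qf_nonneg: "qf m2 n S h k j l \<ge> 0"
proof -
  let ?F = "\<lambda>t. max (max \<bar>blk m2 (S t) h k j l\<bar> \<bar>blk m2 (S t) h l j k\<bar>)
                   (max \<bar>blk m2 (S t) j l h k\<bar> \<bar>blk m2 (S t) j k h l\<bar>)"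
  have "0 \<le> ?F 0" by simp
  also have "\<dots> \<le> Max (?F ` {0..n})" by (intro Max_ge) auto
  finally show ?thesis unfolding qf_def .
qed

lemma alpha_pos: "alpha n h k j l > 0"
  unfolding alpha_def by auto

lemma finite_pairs: "finite (pairs m2)"
  by (rule finite_subset[of _ "{1..m2} \<times> {1..m2}"]) (auto simp: pairs_def)

theorem proposition5:
  fixes m1 m2 n :: nat and S :: "nat \<Rightarrow> nat \<Rightarrow> nat \<Rightarrow> real"
    and h j :: nat and \<gamma> :: "nat \<Rightarrow> nat \<Rightarrow> real" and \<epsilon> :: real
  assumes "\<epsilon> > 0"
    and "in_Qplus (m1 * m2) n S"
    and "h \<in> {1..m1}" and "j \<in> {1..m1}" and "h \<ge> j"
    and "\<forall>(k, l)\<in>pairs m2. \<gamma> k l \<ge> 0"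
  shows "(\<exists>lam. is_minimizer (obj m2 n S h j \<gamma> \<epsilon>) lam) \<and>
         (\<forall>lam. is_minimizer (obj m2 n S h j \<gamma> \<epsilon>) lam \<longrightarrow>
               lam \<in> N1 m2 \<gamma> \<union> N2 m2 n S h j \<gamma> \<epsilon>)"
proof -
  interpret clipped_log_objective "pairs m2" "\<lambda>(k, l). \<gamma> k l" "\<lambda>(k, l). qf m2 n S h k j l"
    "\<lambda>(k, l). alpha n h k j l" \<epsilon>
    using finite_pairs qf_nonneg alpha_pos assms(1,6) by unfold_locales auto
  have "obj m2 n S h j \<gamma> \<epsilon> = objective"
    by (intro ext) (unfold obj_def objective_def, simp add: split_def)
  moreover have "Cset m2 \<gamma> g = below g" for g
    by (auto simp: Cset_def below_def)
  then have "lam_tilde m2 n S h j \<gamma> \<epsilon> g = stationary_point g" for g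
    by (simp add: lam_tilde_def stationary_point_def weight_def slope_def)
  then have "N1 m2 \<gamma> \<union> N2 m2 n S h j \<gamma> \<epsilon> = candidates"
    by (simp add: N1_def N2_def candidates_def)
  ultimately show ?thesis
    using minimizers_in_candidates by simp
qed

end
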